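(* For every $n\geq1$ and every $i\in\{1,\dots,N\}$, $$C^{(n+1)}_{ii}\cdot v=\lambda_i\, C^{(n)}_{ii}\cdot v-G_i\,C^{(n)}_{-i,i}\cdot v-\sum_{k\in I,\ |k|>i}C^{(n)}_{kk}\cdot v.$$
   Context: Let $N\geq1$, $I=\{-N,\dots,-1,1,\dots,N\}$, and for $k\in I$ put $\bar k=0$ if $k>0$, $\bar k=1$ if $k<0$. The Lie superalgebra $\mathfrak{q}(N)$ over $\mathbb{C}$ is spanned by elements $F_{ij}$ ($i,j\in I$) with $F_{-i,-j}=F_{ij}$ (realized as $F_{ij}=E_{ij}+E_{-i,-j}\in\mathfrak{gl}(N|N)$), $F_{ij}$ of parity $\bar\imath+\bar\jmath\bmod 2$, and supercommutator $$[F_{ij}, F_{kl}] = \delta_{kj} F_{il} - (-1)^{(\bar{\imath}+ \bar{\jmath})(\bar{k} + \bar{l})} \delta_{il} F_{kj} + \delta_{k,-j} F_{-i,l} - (-1)^{(\bar{\imath} + \bar{\jmath})(\bar{k} + \bar{l})} \delta_{-i,l} F_{k,-j}.$$ For $n\geq1$ define $C^{(n)}_{ij}\in U(\mathfrak{q}(N))$ by $$C^{(n)}_{ij} = \sum_{k_1,\ldots,k_{n-1}\in I}F_{ik_1} (-1)^{\bar{k}_1} F_{k_1k_2} (-1)^{\bar{k}_2} \cdots F_{k_{n-2}k_{n-1}} (-1)^{\bar{k}_{n-1}} F_{k_{n-1}j}$$ (so $C^{(1)}_{ij}=F_{ij}$). For $i>0$ let $G_i=F_{-i,i}$ $(=F_{i,-i})$.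 Let $V$ be a representation of $\mathfrak{q}(N)$ and $v\in V$ a vector such that $F_{ij}\cdot v=0$ whenever $|i|<|j|$, and $F_{ii}\cdot v=\lambda_i v$ for $i=1,\dots,N$, where $\lambda_1,\dots,\lambda_N\in\mathbb{C}$. *)

theory Defs
  imports Complex_Main
begin

definition Idx :: "nat \<Rightarrow> int set" where
  "Idx N = {k::int. k \<noteq> 0 \<and> \<bar>k\<bar> \<le> int N}"

definition par :: "int \<Rightarrow> nat" where
  "par k = (if k < 0 then 1 else 0)"

definition kdelta :: "int \<Rightarrow> int \<Rightarrow> complex" where
  "kdelta a b = (if a = b then 1 else 0)"

text \<open>A representation of q(N) on a complex vector space V (scalar multiplication sc):
  F i j acts by the linear operator rho i j, with rho (-i) (-j) = rho i j, and
  the operators satisfy the defining supercommutator relations of q(N).\<close>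
definition is_qrep ::
  "nat \<Rightarrow> (complex \<Rightarrow> 'v::ab_group_add \<Rightarrow> 'v) \<Rightarrow> (int \<Rightarrow> int \<Rightarrow> 'v \<Rightarrow> 'v) \<Rightarrow> bool" where
  "is_qrep N sc rho \<longleftrightarrow>
     vector_space sc \<and>
     (\<forall>i\<in>Idx N. \<forall>j\<in>Idx N. Vector_Spaces.linear sc sc (rho i j)) \<and>
     (\<forall>i\<in>Idx N. \<forall>j\<in>Idx N. rho (-i) (-j) = rho i j) \<and>
     (\<forall>i\<in>Idx N. \<forall>j\<in>Idx N. \<forall>k\<in>Idx N. \<forall>l\<in>Idx N. \<forall>w.
        (let s = (-1::complex) ^ ((par i + par j) * (par k + par l)) in
         rho i j (rho k l w) - sc s (rho k l (rho i j w)) =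
           sc (kdelta k j) (rho i l w)
           - sc (s * kdelta i l) (rho k j w)
           + sc (kdelta k (-j)) (rho (-i) l w)
           - sc (s * kdelta (-i) l) (rho k (-j) w)))"

text \<open>Action of C^{(n)}_{ij} (for n \<ge> 1) on a vector:
  C^{(1)}_{ij} = F_{ij},  C^{(n+1)}_{ij} = sum_k F_{ik} (-1)^{bar k} C^{(n)}_{kj}.
  The value for n = 0 is an irrelevant placeholder.\<close>
fun Cact :: "nat \<Rightarrow> (complex \<Rightarrow> 'v::ab_group_add \<Rightarrow> 'v) \<Rightarrow> (int \<Rightarrow> int \<Rightarrow> 'v \<Rightarrow> 'v)
              \<Rightarrow> nat \<Rightarrow> int \<Rightarrow> int \<Rightarrow> 'v \<Rightarrow> 'v" where
  "Cact N sc rho 0 i j w = 0"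
| "Cact N sc rho (Suc 0) i j w = rho i j w"
| "Cact N sc rho (Suc (Suc n)) i j w =
     (\<Sum>k\<in>Idx N. rho i k (sc ((-1) ^ par k) (Cact N sc rho (Suc n) k j w)))"

end

theory Submission imports Defs begin

(*
  The elements C^(n)_kl transform under the adjoint action of q(N) exactly like the generators
  F_kl: their supercommutators with F_ij are given by the defining relations of q(N) with F
  replaced by C^(n), as one sees by induction on n.  Now expand
  C^(n+1)_ii v = sum_m F_im (-1)^(bar m) C^(n)_mi v and use this rule to move F_im to the right,
  where it kills v unless |m| <= i.  The summand m = i gives lambda_i C^(n)_ii v, the summand
  m = -i gives -G_i C^(n)_(-i)i v, and the summands with |m| < i vanish because C^(n)_mi v = 0
  for |m| < |i| (by the same kind of argument).  A summand with |m| > i contributes -C^(n)_mm v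
  plus (-1)^(bar m) C^(n)_ii v, and these last terms cancel in pairs m, -m.
*)

lemma Idx_uminus: "k \<in> Idx N \<Longrightarrow> -k \<in> Idx N"
  by (simp add: Idx_def)

lemma Idx_nonzero: "k \<in> Idx N \<Longrightarrow> k \<noteq> 0"
  by (simp add: Idx_def)

lemma finite_Idx: "finite (Idx N)"
  by (rule finite_subset[of _ "{-int N..int N}"]) (auto simp: Idx_def)

definition parity_sign :: "int \<Rightarrow> complex" where
  "parity_sign k = (-1) ^ par k"

definition super_sign :: "int \<Rightarrow> int \<Rightarrow> int \<Rightarrow> int \<Rightarrow> complex" where
  "super_sign i j k l = (-1) ^ ((par i + par j) * (par k + par l))"

lemma super_sign_mult: "super_sign i j k m * super_sign i j m l = super_sign i j k l"
  unfolding super_sign_def par_def by (auto simp: power_add[symmetric] algebra_simps)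

lemma parity_sign_mult_super_sign_last:
  "parity_sign j * super_sign i j k j = parity_sign i * super_sign i j k i"
  unfolding super_sign_def parity_sign_def par_def by auto

lemma parity_sign_mult_super_sign_last_uminus:
  "i \<noteq> 0 \<Longrightarrow> j \<noteq> 0 \<Longrightarrow>
    parity_sign (-j) * super_sign i j k (-j) = parity_sign (-i) * super_sign i j k (-i)"
  unfolding super_sign_def parity_sign_def par_def by auto

lemma parity_sign_uminus: "k \<noteq> 0 \<Longrightarrow> parity_sign (-k) = - parity_sign k"
  by (simp add: parity_sign_def par_def)

lemma parity_sign_square: "parity_sign k * parity_sign k = 1"
  by (simp add: parity_sign_def par_def)

lemma sum_parity_sign_symmetric:
  assumes "finite A" "0 \<notin> A" "\<And>k. k \<in> A \<Longrightarrow> -k \<in> A"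
  shows "(\<Sum>k\<in>A. parity_sign k) = 0"
proof -
  have "uminus ` A = A"
    using assms(3) by force
  then have "(\<Sum>k\<in>A. parity_sign k) = (\<Sum>k\<in>A. parity_sign (-k))"
    using sum.reindex[of uminus A parity_sign] by (simp add: inj_on_def)
  also have "\<dots> = (\<Sum>k\<in>A. - parity_sign k)"
    using assms(2) by (intro sum.cong refl parity_sign_uminus) auto
  finally show ?thesis
    by (simp add: sum_negf)
qed

lemma sum_parity_sign_Idx_abs: "(\<Sum>k\<in>{k\<in>Idx N. P \<bar>k\<bar>}. parity_sign k) = 0"
  by (rule sum_parity_sign_symmetric) (auto simp: finite_Idx Idx_uminus dest: Idx_nonzero)

(* Cact_Suc_Suc below, phrased with parity_sign, takes over as the unfolding rule. *)
declare Cact.simps(3) [simp del]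

locale qrep = vector_space sc for sc :: "complex \<Rightarrow> 'v::ab_group_add \<Rightarrow> 'v" +
  fixes N :: nat and rho :: "int \<Rightarrow> int \<Rightarrow> 'v \<Rightarrow> 'v"
  assumes is_qrep: "is_qrep N sc rho"
begin

sublocale vector_space_pair sc sc ..

abbreviation C where "C \<equiv> Cact N sc rho"

lemma rho_linear: "i \<in> Idx N \<Longrightarrow> j \<in> Idx N \<Longrightarrow> Vector_Spaces.linear sc sc (rho i j)"
  using is_qrep by (simp add: is_qrep_def)

lemma rho_uminus_uminus: "i \<in> Idx N \<Longrightarrow> j \<in> Idx N \<Longrightarrow> rho (-i) (-j) = rho i j"
  using is_qrep by (simp add: is_qrep_def)

lemma rho_supercommutator:
  "i \<in> Idx N \<Longrightarrow> j \<in> Idx N \<Longrightarrow> k \<in> Idx N \<Longrightarrow> l \<in> Idx N \<Longrightarrow>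
    rho i j (rho k l w) = sc (super_sign i j k l) (rho k l (rho i j w))
      + (sc (kdelta k j) (rho i l w) - sc (super_sign i j k l * kdelta i l) (rho k j w)
      + sc (kdelta k (-j)) (rho (-i) l w) - sc (super_sign i j k l * kdelta (-i) l) (rho k (-j) w))"
  using is_qrep unfolding is_qrep_def Let_def super_sign_def
  by (metis (no_types, lifting) diff_eq_eq add.commute)

lemma Cact_Suc_Suc:
  "C (Suc (Suc n)) k l w = (\<Sum>m\<in>Idx N. rho k m (sc (parity_sign m) (C (Suc n) m l w)))"
  by (simp add: parity_sign_def Cact.simps(3))

lemma Cact_linear: "k \<in> Idx N \<Longrightarrow> l \<in> Idx N \<Longrightarrow> Vector_Spaces.linear sc sc (C (Suc n) k l)"
proof (induction n arbitrary: k l)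
  case 0
  then show ?case
    by (simp add: rho_linear)
next
  case (Suc n)
  have "Vector_Spaces.linear sc sc (rho k m \<circ> sc (parity_sign m) \<circ> C (Suc n) m l)"
    if "m \<in> Idx N" for m
    using Suc that
    by (intro Vector_Spaces.linear_compose[of sc sc _ sc] rho_linear linear_scale_self) auto
  then have "Vector_Spaces.linear sc sc
      (\<lambda>w. \<Sum>m\<in>Idx N. (rho k m \<circ> sc (parity_sign m) \<circ> C (Suc n) m l) w)"
    by (intro linear_compose_sum) blast
  moreover have "C (Suc (Suc n)) k l =
      (\<lambda>w. \<Sum>m\<in>Idx N. (rho k m \<circ> sc (parity_sign m) \<circ> C (Suc n) m l) w)"
    by (rule ext) (simp only: Cact_Suc_Suc comp_def)
  ultimately show ?case
    by simp
qed

lemmas rho_simps = linear_add[OF rho_linear] linear_scale[OF rho_linear] linear_diff[OF rho_linear]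
  linear_0[OF rho_linear] linear_neg[OF rho_linear] linear_sum[OF rho_linear]
lemmas Cact_simps = linear_add[OF Cact_linear] linear_scale[OF Cact_linear]
  linear_diff[OF Cact_linear] linear_0[OF Cact_linear] linear_neg[OF Cact_linear]

lemma sum_scale_kdelta_left:
  "finite A \<Longrightarrow> i \<in> A \<Longrightarrow> (\<Sum>m\<in>A. sc (f m * kdelta i m) (g m)) = sc (f i) (g i)"
  by (subst sum.cong[OF refl, where h = "\<lambda>m. if m = i then sc (f i) (g i) else 0"])
    (auto simp: kdelta_def)

lemma sum_scale_kdelta_right:
  "finite A \<Longrightarrow> i \<in> A \<Longrightarrow> (\<Sum>m\<in>A. sc (f m * kdelta m i) (g m)) = sc (f i) (g i)"
  by (subst sum.cong[OF refl, where h = "\<lambda>m. if m = i then sc (f i) (g i) else 0"])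
    (auto simp: kdelta_def)

lemma rho_Cact_supercommutator:
  assumes "i \<in> Idx N" "j \<in> Idx N" "k \<in> Idx N" "l \<in> Idx N"
  shows "rho i j (C (Suc n) k l w) - sc (super_sign i j k l) (C (Suc n) k l (rho i j w)) =
    sc (kdelta k j) (C (Suc n) i l w) - sc (super_sign i j k l * kdelta i l) (C (Suc n) k j w)
    + sc (kdelta k (-j)) (C (Suc n) (-i) l w)
    - sc (super_sign i j k l * kdelta (-i) l) (C (Suc n) k (-j) w)"
  using assms
proof (induction n arbitrary: i j k l w)
  case 0
  then show ?case
    using rho_supercommutator[of i j k l w] by (simp add: algebra_simps)
next
  case (Suc n)
  let ?C = "C (Suc n)" and ?s = "super_sign i j k l" and ?e = "\<lambda>m. parity_sign m * super_sign i j k m"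
  have ij: "i \<in> Idx N" "j \<in> Idx N" "-i \<in> Idx N" "-j \<in> Idx N"
    using Suc.prems Idx_uminus by auto
  have summand: "rho i j (rho k m (sc (parity_sign m) (?C m l w))) =
      sc ?s (rho k m (sc (parity_sign m) (?C m l (rho i j w))))
      + sc (kdelta k j) (rho i m (sc (parity_sign m) (?C m l w)))
      - sc (?e m * kdelta i m) (rho k j (?C m l w))
      + sc (kdelta k (-j)) (rho (-i) m (sc (parity_sign m) (?C m l w)))
      - sc (?e m * kdelta (-i) m) (rho k (-j) (?C m l w))
      + sc (?e m * kdelta m j) (rho k m (?C i l w))
      - sc (?s * kdelta i l) (rho k m (sc (parity_sign m) (?C m j w)))
      + sc (?e m * kdelta m (-j)) (rho k m (?C (-i) l w))
      - sc (?s * kdelta (-i) l) (rho k m (sc (parity_sign m) (?C m (-j) w)))"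
    (is "?L m = ?R m") if m: "m \<in> Idx N" for m
  proof -
    have IH: "rho i j (?C m l w) = sc (super_sign i j m l) (?C m l (rho i j w))
      + (sc (kdelta m j) (?C i l w) - sc (super_sign i j m l * kdelta i l) (?C m j w)
      + sc (kdelta m (-j)) (?C (-i) l w) - sc (super_sign i j m l * kdelta (-i) l) (?C m (-j) w))"
      using Suc.IH[of i j m l w] Suc.prems m by (simp add: algebra_simps)
    have "?L m = sc (parity_sign m) (rho i j (rho k m (?C m l w)))"
      using Suc.prems m by (simp add: rho_simps)
    also have "\<dots> = sc (parity_sign m) (sc (super_sign i j k m) (rho k m (rho i j (?C m l w)))
      + (sc (kdelta k j) (rho i m (?C m l w)) - sc (super_sign i j k m * kdelta i m) (rho k j (?C m l w))
      + sc (kdelta k (-j)) (rho (-i) m (?C m l w))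
      - sc (super_sign i j k m * kdelta (-i) m) (rho k (-j) (?C m l w))))"
      using rho_supercommutator[of i j k m "?C m l w"] Suc.prems m by simp
    also have "\<dots> = ?R m"
      unfolding IH using Suc.prems ij m super_sign_mult[of i j k m l]
      by (simp add: rho_simps scale_right_distrib scale_right_diff_distrib algebra_simps)
    finally show ?thesis .
  qed
  have "rho i j (C (Suc (Suc n)) k l w) = (\<Sum>m\<in>Idx N. ?L m)"
    unfolding Cact_Suc_Suc using Suc.prems by (simp add: rho_simps)
  also have "\<dots> = (\<Sum>m\<in>Idx N. ?R m)"
    using summand by (rule sum.cong[OF refl])
  also have "\<dots> = sc ?s (C (Suc (Suc n)) k l (rho i j w))
      + sc (kdelta k j) (C (Suc (Suc n)) i l w) - sc (?e i) (rho k j (?C i l w))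
      + sc (kdelta k (-j)) (C (Suc (Suc n)) (-i) l w) - sc (?e (-i)) (rho k (-j) (?C (-i) l w))
      + sc (?e j) (rho k j (?C i l w)) - sc (?s * kdelta i l) (C (Suc (Suc n)) k j w)
      + sc (?e (-j)) (rho k (-j) (?C (-i) l w)) - sc (?s * kdelta (-i) l) (C (Suc (Suc n)) k (-j) w)"
    using sum_scale_kdelta_left[OF finite_Idx ij(1), of ?e "\<lambda>m. rho k j (?C m l w)"]
      sum_scale_kdelta_left[OF finite_Idx ij(3), of ?e "\<lambda>m. rho k (-j) (?C m l w)"]
      sum_scale_kdelta_right[OF finite_Idx ij(2), of ?e "\<lambda>m. rho k m (?C i l w)"]
      sum_scale_kdelta_right[OF finite_Idx ij(4), of ?e "\<lambda>m. rho k m (?C (-i) l w)"]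
    by (simp add: sum.distrib sum_subtractf scale_sum_right Cact_Suc_Suc)
  \<comment> \<open>The m = \<plusminus>i terms of [F_ij, F_km] cancel the m = \<plusminus>j terms of [F_ij, C_ml].\<close>
  finally show ?case
    using parity_sign_mult_super_sign_last[of j i k] parity_sign_mult_super_sign_last_uminus[of i j k]
      Idx_nonzero[OF ij(1)] Idx_nonzero[OF ij(2)]
    by (simp add: algebra_simps)
qed

end

locale highest_weight_vector = qrep sc N rho for sc :: "complex \<Rightarrow> 'v::ab_group_add \<Rightarrow> 'v" and N rho +
  fixes v :: 'v and lam :: "int \<Rightarrow> complex"
  assumes rho_annihilates: "i \<in> Idx N \<Longrightarrow> j \<in> Idx N \<Longrightarrow> \<bar>i\<bar> < \<bar>j\<bar> \<Longrightarrow> rho i j v = 0"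
    and rho_diag: "1 \<le> i \<Longrightarrow> i \<le> int N \<Longrightarrow> rho i i v = sc (lam i) v"
begin

lemma Cact_eq_0_if_abs_less:
  "k \<in> Idx N \<Longrightarrow> i \<in> Idx N \<Longrightarrow> \<bar>k\<bar> < \<bar>i\<bar> \<Longrightarrow> C (Suc n) k i v = 0"
proof (induction n arbitrary: k i)
  case 0
  then show ?case
    by (simp add: rho_annihilates)
next
  case (Suc n)
  let ?A = "{m\<in>Idx N. \<bar>i\<bar> \<le> \<bar>m\<bar>}"
  have summand: "rho k m (sc (parity_sign m) (C (Suc n) m i v)) =
      (if \<bar>i\<bar> \<le> \<bar>m\<bar> then sc (parity_sign m) (C (Suc n) k i v) else 0)"
    if m: "m \<in> Idx N" for m
  proof (cases "\<bar>i\<bar> \<le> \<bar>m\<bar>")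
    case True
    have "k \<noteq> i" "-k \<noteq> i"
      using Suc.prems by auto
    then have "rho k m (C (Suc n) m i v) = C (Suc n) k i v"
      using rho_Cact_supercommutator[of k m m i n v] Suc.prems m True rho_annihilates[of k m]
        Idx_nonzero[OF m]
      by (simp add: kdelta_def Cact_simps)
    then show ?thesis
      using True m Suc.prems by (simp add: rho_simps)
  next
    case False
    then show ?thesis
      using Suc.IH[of m i] Suc.prems m by (simp add: rho_simps)
  qed
  have "C (Suc (Suc n)) k i v = (\<Sum>m\<in>?A. sc (parity_sign m) (C (Suc n) k i v))"
    by (simp add: Cact_Suc_Suc summand sum.inter_filter finite_Idx)
  also have "\<dots> = sc (\<Sum>m\<in>?A. parity_sign m) (C (Suc n) k i v)"
    by (simp add: scale_sum_left)
  finally show ?case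
    using sum_parity_sign_Idx_abs[of N "\<lambda>a. \<bar>i\<bar> \<le> a"] by simp
qed

lemma rho_Cact_diag_summand:
  assumes i: "1 \<le> i" "i \<le> int N" and m: "m \<in> Idx N"
  shows "rho i m (sc (parity_sign m) (C (Suc n) m i v)) =
    (if m = i then sc (lam i) (C (Suc n) i i v) else 0)
    + (if m = -i then - rho (-i) i (C (Suc n) (-i) i v) else 0)
    + (if i < \<bar>m\<bar> then sc (parity_sign m) (C (Suc n) i i v) - C (Suc n) m m v else 0)"
proof -
  have iI: "i \<in> Idx N" "-i \<in> Idx N"
    using i by (auto simp: Idx_def)
  have par_i: "par i = 0" "par (-i) = 1"
    using i by (auto simp: par_def)
  have pull: "rho i m (sc (parity_sign m) (C (Suc n) m i v)) = sc (parity_sign m) (rho i m (C (Suc n) m i v))"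
    using iI m by (simp add: rho_simps)
  consider "m = i" | "m = -i" | "\<bar>m\<bar> < i" | "i < \<bar>m\<bar>"
    by linarith
  then show ?thesis
  proof cases
    case 1
    have "rho i i (C (Suc n) i i v) = sc (lam i) (C (Suc n) i i v)"
      using rho_Cact_supercommutator[of i i i i n v] iI i rho_diag[OF i]
      by (simp add: kdelta_def super_sign_def Cact_simps)
    then show ?thesis
      using 1 pull par_i i by (simp add: parity_sign_def)
  next
    case 2
    have "rho i (-i) = rho (-i) i"
      using rho_uminus_uminus[OF iI(2) iI(1)] by simp
    then show ?thesis
      using 2 pull par_i i by (simp add: parity_sign_def)
  next
    case 3
    then have "C (Suc n) m i v = 0"
      using Cact_eq_0_if_abs_less[of m i n] m iI by simp
    then show ?thesis
      using 3 iI m i by (auto simp: rho_simps)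
  next
    case 4
    have "super_sign i m m i = parity_sign m"
      using par_i by (simp add: super_sign_def parity_sign_def par_def)
    then have "rho i m (C (Suc n) m i v) = C (Suc n) i i v - sc (parity_sign m) (C (Suc n) m m v)"
      using rho_Cact_supercommutator[of i m m i n v] iI m 4 rho_annihilates[of i m] Idx_nonzero[OF m] i
      by (simp add: kdelta_def Cact_simps)
    moreover have "m \<noteq> i" "m \<noteq> -i"
      using 4 i by auto
    ultimately show ?thesis
      using 4 pull i parity_sign_square[of m] by (simp add: scale_right_diff_distrib)
  qed
qed

lemma Cact_Suc_Suc_diag:
  assumes "1 \<le> i" "i \<le> int N"
  shows "C (Suc (Suc n)) i i v = sc (lam i) (C (Suc n) i i v)
    - rho (-i) i (C (Suc n) (-i) i v) - (\<Sum>k\<in>{k\<in>Idx N. \<bar>k\<bar> > i}. C (Suc n) k k v)"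
proof -
  let ?A = "{m\<in>Idx N. i < \<bar>m\<bar>}"
  have "i \<in> Idx N" "-i \<in> Idx N"
    using assms by (auto simp: Idx_def)
  then have "C (Suc (Suc n)) i i v = sc (lam i) (C (Suc n) i i v) - rho (-i) i (C (Suc n) (-i) i v)
      + (\<Sum>m\<in>?A. sc (parity_sign m) (C (Suc n) i i v) - C (Suc n) m m v)"
    using assms by (simp add: Cact_Suc_Suc rho_Cact_diag_summand sum.distrib sum.inter_filter finite_Idx)
  also have "(\<Sum>m\<in>?A. sc (parity_sign m) (C (Suc n) i i v) - C (Suc n) m m v)
      = sc (\<Sum>m\<in>?A. parity_sign m) (C (Suc n) i i v) - (\<Sum>m\<in>?A. C (Suc n) m m v)"
    by (simp add: sum_subtractf scale_sum_left)
  finally show ?thesis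
    using sum_parity_sign_Idx_abs[of N "\<lambda>a. i < a"] by simp
qed

end

theorem mainTheorem5:
  fixes N :: nat
    and sc :: "complex \<Rightarrow> 'v::ab_group_add \<Rightarrow> 'v"
    and rho :: "int \<Rightarrow> int \<Rightarrow> 'v \<Rightarrow> 'v"
    and v :: 'v
    and lam :: "int \<Rightarrow> complex"
  assumes "N \<ge> 1"
    and "is_qrep N sc rho"
    and "\<And>i j. i \<in> Idx N \<Longrightarrow> j \<in> Idx N \<Longrightarrow> \<bar>i\<bar> < \<bar>j\<bar> \<Longrightarrow> rho i j v = 0"
    and "\<And>i. 1 \<le> i \<Longrightarrow> i \<le> int N \<Longrightarrow> rho i i v = sc (lam i) v"
    and "n \<ge> 1"
    and "1 \<le> i" and "i \<le> int N"
  shows "Cact N sc rho (n + 1) i i v =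
           sc (lam i) (Cact N sc rho n i i v)
           - rho (-i) i (Cact N sc rho n (-i) i v)
           - (\<Sum>k\<in>{k\<in>Idx N. \<bar>k\<bar> > i}. Cact N sc rho n k k v)"
proof -
  interpret highest_weight_vector sc N rho v lam
    using assms(2-4) by unfold_locales (auto simp: is_qrep_def vector_space_def)
  obtain m where "n = Suc m"
    using \<open>n \<ge> 1\<close> by (cases n) auto
  then show ?thesis
    using Cact_Suc_Suc_diag[OF \<open>1 \<le> i\<close> \<open>i \<le> int N\<close>, of m] by simp
qed

end
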